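(* Let $c\in\mathbb R$ and let $\mu\ge0$ be a $C^2$ solution of $-c\partial_\xi\mu=\theta\partial_{\xi\xi}\mu+\alpha\partial_{\theta\theta}\mu+r\mu(1-\nu)$ on $\mathbb R\times\Theta$ with $\partial_\theta\mu(\xi,\theta_{\min})=\partial_\theta\mu(\xi,\theta_{\max})=0$, such that $\nu$ is locally bounded. Then for every $0<b<\infty$ there exists $C(b)<\infty$ such that $$\mu(\xi,\theta)\le C(b)\,\mu(\xi,\theta')\quad\text{for all }(\xi,\theta,\theta')\in(-b,b)\times\Theta\times\Theta.$$
   Context: $\Theta=(\theta_{\min},\theta_{\max})$, $0<\theta_{\min}<\theta_{\max}<\infty$, $\alpha,r>0$; $\nu(\xi)=\int_\Theta\mu(\xi,\theta)d\theta$. *)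

theory Defs
  imports "HOL-Analysis.Analysis"
begin

text \<open>A function f is C^2 on S with
  first derivative Df and second derivative D2f (Frechet derivatives, taken
  within S, so one-sided at boundary points of S), the second derivative being
  continuous on S.\<close>
definition C2_on_with ::
  "(real \<times> real) set \<Rightarrow> (real \<times> real \<Rightarrow> real)
   \<Rightarrow> (real \<times> real \<Rightarrow> ((real \<times> real) \<Rightarrow>\<^sub>L real))
   \<Rightarrow> (real \<times> real \<Rightarrow> ((real \<times> real) \<Rightarrow>\<^sub>L ((real \<times> real) \<Rightarrow>\<^sub>L real))) \<Rightarrow> bool" where
  "C2_on_with S f Df D2f \<longleftrightarrow>
     (\<forall>z\<in>S. (f has_derivative blinfun_apply (Df z)) (at z within S)) \<and>
     (\<forall>z\<in>S. (Df has_derivative blinfun_apply (D2f z)) (at z within S)) \<and>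
     continuous_on S D2f"

definition nu :: "real \<Rightarrow> real \<Rightarrow> (real \<times> real \<Rightarrow> real) \<Rightarrow> real \<Rightarrow> real" where
  "nu tmin tmax \<mu> \<xi> = integral {tmin..tmax} (\<lambda>\<theta>. \<mu> (\<xi>, \<theta>))"

end

theory Submission
  imports Defs
begin

(* If \<mu> vanishes on the open strip, C = 0 works. Otherwise \<mu> is positive at an interior point z0,
   hence bounded below by some \<delta> > 0 on a small ball around z0. On an annulus around z0 compare \<mu>
   with the Gaussian barrier \<delta> (exp (-l |z - z0|^2) - exp (-l R^2)): for l large it is a strict
   subsolution of \<theta> u_\<xi>\<xi> + \<alpha> u_\<theta>\<theta> + c u_\<xi> - K u, where K bounds r (\<nu> - 1) on the annulus, and
   its \<theta>-derivative points outward on the Neumann boundary. So \<mu> minus the barrier has no negative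
   minimum, neither inside the strip (second-order conditions against the equation) nor on its
   boundary (Hopf's argument), and \<mu> > 0 on the whole closed strip. On the compact rectangle
   [-b, b] \<times> [tmin, tmax] the continuous positive function \<mu> is then bounded above and below by
   positive constants. *)

lemma has_derivative_along_line:
  fixes f :: "'a::real_normed_vector \<Rightarrow> 'b::real_normed_vector"
  assumes "(f has_derivative F) (at (p + t *\<^sub>R e) within S)"
    and "(\<lambda>s. p + s *\<^sub>R e) ` T \<subseteq> S"
  shows "((\<lambda>s. f (p + s *\<^sub>R e)) has_derivative (\<lambda>h. h *\<^sub>R F e)) (at t within T)"
proof -
  have line: "((\<lambda>s. p + s *\<^sub>R e) has_derivative (\<lambda>h. h *\<^sub>R e)) (at t within T)"
    by (auto intro!: derivative_eq_intros)
  have "(f has_derivative F) (at (p + t *\<^sub>R e) within (\<lambda>s. p + s *\<^sub>R e) ` T)"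
    using assms by (rule has_derivative_subset)
  from diff_chain_within[OF line this] show ?thesis
    using linear_cmul[OF has_derivative_linear[OF assms(1)]] by (simp add: comp_def)
qed

lemma has_real_derivative_along_line:
  fixes f :: "'a::real_normed_vector \<Rightarrow> real"
  assumes "(f has_derivative F) (at (p + t *\<^sub>R e) within S)"
    and "(\<lambda>s. p + s *\<^sub>R e) ` T \<subseteq> S"
  shows "((\<lambda>s. f (p + s *\<^sub>R e)) has_real_derivative F e) (at t within T)"
proof -
  have "(\<lambda>h. h *\<^sub>R F e) = (*) (F e)" by (auto simp: fun_eq_iff)
  then show ?thesis
    using has_derivative_along_line[OF assms] by (simp add: has_field_derivative_def)
qed

lemma has_real_derivative_along_line_blinfun:
  fixes Df :: "'a::real_normed_vector \<Rightarrow> 'a \<Rightarrow>\<^sub>L real"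
  assumes "(Df has_derivative blinfun_apply D2) (at (p + t *\<^sub>R e) within S)"
    and "(\<lambda>s. p + s *\<^sub>R e) ` T \<subseteq> S"
  shows "((\<lambda>s. Df (p + s *\<^sub>R e) e) has_real_derivative D2 e e) (at t within T)"
proof -
  have "((\<lambda>s. Df (p + s *\<^sub>R e) e) has_derivative (\<lambda>h. (h *\<^sub>R D2 e) e)) (at t within T)"
    using bounded_linear.has_derivative[OF blinfun.bounded_linear_left has_derivative_along_line[OF assms]] .
  moreover have "(\<lambda>h. (h *\<^sub>R D2 e) e) = (*) (D2 e e)"
    by (auto simp: fun_eq_iff blinfun.scaleR_left)
  ultimately show ?thesis by (simp add: has_field_derivative_def)
qed

definition gaussian :: "real \<Rightarrow> 'a::real_normed_vector \<Rightarrow> 'a \<Rightarrow> real" where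
  "gaussian l c z = exp (- l * (dist z c)\<^sup>2)"

lemma gaussian_pos: "0 < gaussian l c z"
  by (simp add: gaussian_def)

lemma gaussian_le_one: "0 \<le> l \<Longrightarrow> gaussian l c z \<le> 1"
  by (simp add: gaussian_def)

lemma gaussian_along_line:
  fixes p c e :: "'a::real_inner"
  shows "((\<lambda>s. gaussian l c (p + s *\<^sub>R e)) has_real_derivative
           gaussian l c (p + t *\<^sub>R e) * (- 2 * l * inner (p + t *\<^sub>R e - c) e)) (at t within T)"
  unfolding gaussian_def dist_norm power2_norm_eq_inner
  by (auto intro!: derivative_eq_intros simp: algebra_simps inner_commute)

lemma gaussian_along_line_second:
  fixes p c e :: "'a::real_inner"
  shows "((\<lambda>s. gaussian l c (p + s *\<^sub>R e) * (- 2 * l * inner (p + s *\<^sub>R e - c) e)) has_real_derivative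
           gaussian l c (p + t *\<^sub>R e) * (4 * l\<^sup>2 * (inner (p + t *\<^sub>R e - c) e)\<^sup>2 - 2 * l * (norm e)\<^sup>2))
         (at t within T)"
proof -
  have "((\<lambda>s. - 2 * l * inner (p + s *\<^sub>R e - c) e) has_real_derivative - 2 * l * inner e e)
      (at t within T)"
    unfolding inner_diff_left inner_add_left inner_scaleR_left
    by (auto intro!: derivative_eq_intros)
  from DERIV_mult[OF gaussian_along_line this] show ?thesis
    by (rule DERIV_cong) (simp add: algebra_simps power2_eq_square flip: power2_norm_eq_inner)
qed

lemma local_min_second_order:
  fixes \<phi> \<phi>' :: "real \<Rightarrow> real"
  assumes "0 < \<eta>" and min: "\<And>t. \<bar>t\<bar> < \<eta> \<Longrightarrow> \<phi> 0 \<le> \<phi> t"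
    and \<phi>': "\<And>t. \<bar>t\<bar> < \<eta> \<Longrightarrow> (\<phi> has_real_derivative \<phi>' t) (at t)"
    and \<phi>'': "(\<phi>' has_real_derivative a) (at 0)"
  shows "\<phi>' 0 = 0 \<and> 0 \<le> a"
proof
  show crit: "\<phi>' 0 = 0"
    using DERIV_local_min[OF \<phi>'[of 0] \<open>0 < \<eta>\<close>] min \<open>0 < \<eta>\<close> by auto
  show "0 \<le> a"
  proof (rule ccontr)
    assume "\<not> 0 \<le> a"
    then have "a < 0" by simp
    from DERIV_neg_dec_right[OF \<phi>'' this] crit
    obtain d where "0 < d" and decr: "\<And>h. 0 < h \<Longrightarrow> h < d \<Longrightarrow> \<phi>' h < 0"
      by auto
    define t where "t = min d \<eta> / 2"
    have t: "0 < t" "t < d" "t < \<eta>"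
      using \<open>0 < d\<close> \<open>0 < \<eta>\<close> by (auto simp: t_def)
    have "(\<phi> has_real_derivative \<phi>' s) (at s)" if "0 \<le> s" "s \<le> t" for s
      using \<phi>' that t by simp
    from MVT2[OF \<open>0 < t\<close> this]
    obtain s where "0 < s" "s < t" "\<phi> t - \<phi> 0 = (t - 0) * \<phi>' s"
      by blast
    moreover have "\<phi>' s < 0"
      using decr \<open>0 < s\<close> \<open>s < t\<close> t by auto
    ultimately have "\<phi> t < \<phi> 0"
      using mult_pos_neg[OF \<open>0 < t\<close>, of "\<phi>' s"] by simp
    with min[of t] t show False by auto
  qed
qed

lemma local_min_minus_gaussian:
  fixes f :: "'a::real_inner \<Rightarrow> real"
  assumes "0 < \<eta>" "norm e = 1"
    and min: "\<And>z. z \<in> ball p \<eta> \<Longrightarrow> f p - \<delta> * gaussian l c p \<le> f z - \<delta> * gaussian l c z"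
    and Df: "\<And>z. z \<in> ball p \<eta> \<Longrightarrow> (f has_derivative blinfun_apply (Df z)) (at z)"
    and D2f: "(Df has_derivative blinfun_apply D2f) (at p)"
  shows "Df p e = \<delta> * gaussian l c p * (- 2 * l * inner (p - c) e)"
    and "\<delta> * gaussian l c p * (4 * l\<^sup>2 * (inner (p - c) e)\<^sup>2 - 2 * l) \<le> D2f e e"
proof -
  define \<phi> where "\<phi> t = f (p + t *\<^sub>R e) - \<delta> * gaussian l c (p + t *\<^sub>R e)" for t
  define \<phi>' where "\<phi>' t = Df (p + t *\<^sub>R e) e
    - \<delta> * (gaussian l c (p + t *\<^sub>R e) * (- 2 * l * inner (p + t *\<^sub>R e - c) e))" for t
  have in_ball: "p + t *\<^sub>R e \<in> ball p \<eta>" if "\<bar>t\<bar> < \<eta>" for t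
    using that \<open>norm e = 1\<close> by (simp add: dist_norm)
  have "\<phi>' 0 = 0 \<and>
      0 \<le> D2f e e - \<delta> * (gaussian l c p * (4 * l\<^sup>2 * (inner (p - c) e)\<^sup>2 - 2 * l * (norm e)\<^sup>2))"
  proof (rule local_min_second_order[OF \<open>0 < \<eta>\<close>])
    show "\<phi> 0 \<le> \<phi> t" if "\<bar>t\<bar> < \<eta>" for t
      using min[OF in_ball[OF that]] by (simp add: \<phi>_def)
    show "(\<phi> has_real_derivative \<phi>' t) (at t)" if "\<bar>t\<bar> < \<eta>" for t
      unfolding \<phi>_def \<phi>'_def
      by (intro DERIV_diff DERIV_cmult gaussian_along_line
          has_real_derivative_along_line[where S = UNIV] Df in_ball that) auto
    show "(\<phi>' has_real_derivative
        D2f e e - \<delta> * (gaussian l c p * (4 * l\<^sup>2 * (inner (p - c) e)\<^sup>2 - 2 * l * (norm e)\<^sup>2))) (at 0)"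
      unfolding \<phi>'_def
      using DERIV_diff[OF has_real_derivative_along_line_blinfun[where S = UNIV and t = 0]
          DERIV_cmult[OF gaussian_along_line_second[where t = 0]]] D2f
      by simp
  qed
  then show "Df p e = \<delta> * gaussian l c p * (- 2 * l * inner (p - c) e)"
    and "\<delta> * gaussian l c p * (4 * l\<^sup>2 * (inner (p - c) e)\<^sup>2 - 2 * l) \<le> D2f e e"
    using \<open>norm e = 1\<close> by (auto simp: \<phi>'_def)
qed

lemma boundary_min_minus_gaussian:
  fixes f :: "'a::real_inner \<Rightarrow> real"
  assumes "0 < \<eta>" and into: "\<And>t. 0 \<le> t \<Longrightarrow> t \<le> \<eta> \<Longrightarrow> p + t *\<^sub>R e \<in> S"
    and min: "\<And>t. 0 \<le> t \<Longrightarrow> t < \<eta> \<Longrightarrow>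
      f p - \<delta> * gaussian l c p \<le> f (p + t *\<^sub>R e) - \<delta> * gaussian l c (p + t *\<^sub>R e)"
    and Df: "(f has_derivative F) (at p within S)"
  shows "\<delta> * gaussian l c p * (- 2 * l * inner (p - c) e) \<le> F e"
proof (rule ccontr)
  assume "\<not> ?thesis"
  then have neg: "F e - \<delta> * (gaussian l c p * (- 2 * l * inner (p - c) e)) < 0"
    by simp
  define \<psi> where "\<psi> t = f (p + t *\<^sub>R e) - \<delta> * gaussian l c (p + t *\<^sub>R e)" for t
  have "((\<lambda>t. f (p + t *\<^sub>R e)) has_real_derivative F e) (at 0 within {0..\<eta>})"
    using Df into by (intro has_real_derivative_along_line[where S = S]) auto
  then have "(\<psi> has_real_derivative F e - \<delta> * (gaussian l c p * (- 2 * l * inner (p - c) e)))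
      (at 0 within {0..\<eta>})"
    unfolding \<psi>_def using DERIV_diff[OF _ DERIV_cmult[OF gaussian_along_line[where t = 0]]]
    by simp
  from has_real_derivative_neg_dec_right[OF this neg]
  obtain d where "0 < d" and decr: "\<And>h. 0 < h \<Longrightarrow> h \<le> \<eta> \<Longrightarrow> h < d \<Longrightarrow> \<psi> h < \<psi> 0"
    by auto
  define h where "h = min d \<eta> / 2"
  have "0 < h" "h < d" "h < \<eta>"
    using \<open>0 < d\<close> \<open>0 < \<eta>\<close> by (auto simp: h_def)
  with decr[of h] min[of h] show False by (simp add: \<psi>_def)
qed

lemma compact_positive_ratio_bounded:
  fixes f :: "'a::topological_space \<Rightarrow> real"
  assumes "compact Q" "continuous_on Q f" "\<And>z. z \<in> Q \<Longrightarrow> 0 < f z"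
  shows "\<exists>C. \<forall>z\<in>Q. \<forall>z'\<in>Q. f z \<le> C * f z'"
proof (cases "Q = {}")
  case False
  obtain zmin where "zmin \<in> Q" and min: "\<And>z. z \<in> Q \<Longrightarrow> f zmin \<le> f z"
    using continuous_attains_inf[OF assms(1) False assms(2)] by blast
  obtain zmax where "zmax \<in> Q" and max: "\<And>z. z \<in> Q \<Longrightarrow> f z \<le> f zmax"
    using continuous_attains_sup[OF assms(1) False assms(2)] by blast
  have "0 < f zmin" "0 < f zmax"
    using assms(3) \<open>zmin \<in> Q\<close> \<open>zmax \<in> Q\<close> by auto
  have "f z \<le> f zmax / f zmin * f z'" if "z \<in> Q" "z' \<in> Q" for z z'
  proof -
    have "f z \<le> f zmax / f zmin * f zmin"
      using max[OF \<open>z \<in> Q\<close>] \<open>0 < f zmin\<close> by simp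
    also have "\<dots> \<le> f zmax / f zmin * f z'"
      using min[OF \<open>z' \<in> Q\<close>] \<open>0 < f zmin\<close> \<open>0 < f zmax\<close> by (intro mult_left_mono) auto
    finally show ?thesis .
  qed
  then show ?thesis by blast
qed simp

lemma continuous_on_lower_bound_near:
  fixes f :: "'a::metric_space \<Rightarrow> real"
  assumes "continuous_on S f" "z\<^sub>0 \<in> S" "0 < f z\<^sub>0"
  shows "\<exists>\<rho>>0. \<forall>z\<in>S. dist z z\<^sub>0 \<le> \<rho> \<longrightarrow> f z\<^sub>0 / 2 \<le> f z"
proof -
  obtain d where "0 < d" and d: "\<And>z. z \<in> S \<Longrightarrow> dist z z\<^sub>0 < d \<Longrightarrow> dist (f z) (f z\<^sub>0) < f z\<^sub>0 / 2"
    using assms unfolding continuous_on_iff by (meson half_gt_zero)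
  have "f z\<^sub>0 / 2 \<le> f z" if "z \<in> S" "dist z z\<^sub>0 \<le> d / 2" for z
    using d[OF that(1)] that(2) \<open>0 < d\<close> unfolding dist_real_def by arith
  then show ?thesis
    using \<open>0 < d\<close> by (intro exI[of _ "d / 2"]) auto
qed

(* With X, Y the coordinates of z - z0 and a = min tmin \<alpha>, the right-hand side is the operator
   applied to the Gaussian, divided by the Gaussian. *)
lemma gaussian_barrier_inequality:
  fixes a y T \<alpha> K \<rho> R l X Y c :: real
  assumes "0 < a" "a \<le> y" "y \<le> T" "a \<le> \<alpha>" "0 \<le> K" "\<rho>\<^sup>2 \<le> X\<^sup>2 + Y\<^sup>2" "\<bar>X\<bar> \<le> R" "1 \<le> l"
    and l_large: "2 * (T + \<alpha> + \<bar>c\<bar> * R) + K \<le> l * (a * \<rho>\<^sup>2)"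
  shows "K < y * (4 * l\<^sup>2 * X\<^sup>2 - 2 * l) + \<alpha> * (4 * l\<^sup>2 * Y\<^sup>2 - 2 * l) + c * (- 2 * l * X)"
proof -
  define M where "M = T + \<alpha> + \<bar>c\<bar> * R"
  have "0 < M"
    using assms by (simp add: M_def add_pos_nonneg order.trans[OF abs_ge_zero assms(7)])
  have "4 * l * (2 * M + K) \<le> 4 * l\<^sup>2 * a * \<rho>\<^sup>2"
    using mult_left_mono[OF l_large, of "4 * l"] \<open>1 \<le> l\<close> by (simp add: M_def power2_eq_square algebra_simps)
  also have "\<dots> \<le> 4 * l\<^sup>2 * a * (X\<^sup>2 + Y\<^sup>2)"
    using assms by (intro mult_left_mono) auto
  also have "\<dots> \<le> y * (4 * l\<^sup>2 * X\<^sup>2) + \<alpha> * (4 * l\<^sup>2 * Y\<^sup>2)"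
    using assms by (simp add: distrib_left add_mono mult_right_mono mult.assoc mult.left_commute)
  finally have quadratic: "4 * l * (2 * M + K) \<le> y * (4 * l\<^sup>2 * X\<^sup>2) + \<alpha> * (4 * l\<^sup>2 * Y\<^sup>2)" .
  have "c * X \<le> \<bar>c\<bar> * R"
    using abs_mult[of c X] abs_ge_self[of "c * X"] mult_left_mono[OF assms(7), of "\<bar>c\<bar>"] by simp
  then have "2 * l * (c * X) \<le> 2 * l * (\<bar>c\<bar> * R)"
    using \<open>1 \<le> l\<close> by (intro mult_left_mono) auto
  moreover have "y * (2 * l) \<le> T * (2 * l)"
    using assms by (intro mult_right_mono) auto
  ultimately have linear: "- 2 * l * M \<le> - y * (2 * l) - \<alpha> * (2 * l) + c * (- 2 * l * X)"
    by (simp add: M_def algebra_simps)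
  have "K < 6 * l * M + 4 * l * K"
    using \<open>0 < M\<close> \<open>1 \<le> l\<close> \<open>0 \<le> K\<close> mult_right_mono[of 1 "4 * l" K] mult_pos_pos[of l M]
    by linarith
  then show ?thesis
    using quadratic linear by (simp add: algebra_simps)
qed

locale travelling_wave =
  fixes tmin tmax \<alpha> r c :: real
    and \<mu> :: "real \<times> real \<Rightarrow> real"
    and D\<mu> :: "real \<times> real \<Rightarrow> ((real \<times> real) \<Rightarrow>\<^sub>L real)"
    and D2\<mu> :: "real \<times> real \<Rightarrow> ((real \<times> real) \<Rightarrow>\<^sub>L ((real \<times> real) \<Rightarrow>\<^sub>L real))"
  assumes tmin_pos: "0 < tmin" and tmin_less_tmax: "tmin < tmax" and \<alpha>_pos: "0 < \<alpha>" and r_pos: "0 < r"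
    and C2: "C2_on_with (UNIV \<times> {tmin..tmax}) \<mu> D\<mu> D2\<mu>"
    and nonneg: "\<And>\<xi> \<theta>. \<theta> \<in> {tmin..tmax} \<Longrightarrow> 0 \<le> \<mu> (\<xi>, \<theta>)"
    and eq: "\<And>\<xi> \<theta>. \<theta> \<in> {tmin<..<tmax} \<Longrightarrow>
        - c * D\<mu> (\<xi>, \<theta>) (1, 0)
          = \<theta> * D2\<mu> (\<xi>, \<theta>) (1, 0) (1, 0) + \<alpha> * D2\<mu> (\<xi>, \<theta>) (0, 1) (0, 1)
            + r * \<mu> (\<xi>, \<theta>) * (1 - nu tmin tmax \<mu> \<xi>)"
    and bc_min: "\<And>\<xi>. D\<mu> (\<xi>, tmin) (0, 1) = 0"
    and bc_max: "\<And>\<xi>. D\<mu> (\<xi>, tmax) (0, 1) = 0"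
    and loc_bdd: "\<And>K. compact K \<Longrightarrow> bounded (nu tmin tmax \<mu> ` K)"
begin

abbreviation strip :: "(real \<times> real) set" where
  "strip \<equiv> UNIV \<times> {tmin..tmax}"

lemma continuous_on_\<mu>: "continuous_on strip \<mu>"
  using C2 has_derivative_continuous unfolding C2_on_with_def continuous_on_eq_continuous_within
  by blast

lemma has_derivative_\<mu>_within:
  assumes "z \<in> strip"
  shows "(\<mu> has_derivative blinfun_apply (D\<mu> z)) (at z within strip)"
  using C2 assms unfolding C2_on_with_def by blast

lemma has_derivative_interior:
  assumes "tmin < y" "y < tmax"
  shows "(\<mu> has_derivative blinfun_apply (D\<mu> (x, y))) (at (x, y))"
    and "(D\<mu> has_derivative blinfun_apply (D2\<mu> (x, y))) (at (x, y))"
proof -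
  have "(x, y) \<in> interior (strip)"
    using assms by (simp add: interior_Times)
  then show "(\<mu> has_derivative blinfun_apply (D\<mu> (x, y))) (at (x, y))"
    and "(D\<mu> has_derivative blinfun_apply (D2\<mu> (x, y))) (at (x, y))"
    using C2 at_within_interior interior_subset unfolding C2_on_with_def by (metis subsetD)+
qed

lemma boundary_local_min_below_gaussian_impossible:
  assumes "tmin < \<theta>\<^sub>0" "\<theta>\<^sub>0 < tmax" "0 < \<delta>" "0 < l" "y = tmin \<or> y = tmax" "0 < \<eta>"
    and min: "\<And>z. z \<in> ball (x, y) \<eta> \<Longrightarrow> snd z \<in> {tmin..tmax} \<Longrightarrow>
      \<mu> (x, y) - \<delta> * gaussian l (\<xi>\<^sub>0, \<theta>\<^sub>0) (x, y) \<le> \<mu> z - \<delta> * gaussian l (\<xi>\<^sub>0, \<theta>\<^sub>0) z"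
  shows False
proof -
  define e :: "real \<times> real" where "e = (if y = tmin then (0, 1) else (0, - 1))"
  have inward: "snd ((x, y) + t *\<^sub>R e) \<in> {tmin..tmax}" if "0 \<le> t" "t \<le> tmax - tmin" for t
    using assms(5) that by (auto simp: e_def)
  have "D\<mu> (x, y) e = 0"
    using assms(5) bc_min bc_max by (auto simp: e_def blinfun.minus_right[of _ "(0, 1)", simplified])
  moreover have "inner ((x, y) - (\<xi>\<^sub>0, \<theta>\<^sub>0)) e < 0"
    using assms(1,2,5) by (auto simp: e_def)
  then have "0 < \<delta> * gaussian l (\<xi>\<^sub>0, \<theta>\<^sub>0) (x, y) * (2 * l) * (- inner ((x, y) - (\<xi>\<^sub>0, \<theta>\<^sub>0)) e)"
    using assms(3,4) gaussian_pos by (intro mult_pos_pos) auto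
  then have "0 < \<delta> * gaussian l (\<xi>\<^sub>0, \<theta>\<^sub>0) (x, y) * (- 2 * l * inner ((x, y) - (\<xi>\<^sub>0, \<theta>\<^sub>0)) e)"
    by (simp add: algebra_simps)
  moreover have "\<delta> * gaussian l (\<xi>\<^sub>0, \<theta>\<^sub>0) (x, y) * (- 2 * l * inner ((x, y) - (\<xi>\<^sub>0, \<theta>\<^sub>0)) e)
      \<le> D\<mu> (x, y) e"
  proof (rule boundary_min_minus_gaussian[where S = "strip"])
    show "0 < min \<eta> (tmax - tmin)"
      using \<open>0 < \<eta>\<close> tmin_less_tmax by simp
    show "(x, y) + t *\<^sub>R e \<in> strip" if "0 \<le> t" "t \<le> min \<eta> (tmax - tmin)" for t
      using inward[of t] that by (simp add: mem_Times_iff)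
    show "\<mu> (x, y) - \<delta> * gaussian l (\<xi>\<^sub>0, \<theta>\<^sub>0) (x, y)
        \<le> \<mu> ((x, y) + t *\<^sub>R e) - \<delta> * gaussian l (\<xi>\<^sub>0, \<theta>\<^sub>0) ((x, y) + t *\<^sub>R e)"
      if "0 \<le> t" "t < min \<eta> (tmax - tmin)" for t
      using min[of "(x, y) + t *\<^sub>R e"] inward[of t] that
      by (auto simp: e_def dist_norm)
    show "(\<mu> has_derivative blinfun_apply (D\<mu> (x, y))) (at (x, y) within strip)"
      using assms(5) tmin_less_tmax by (intro has_derivative_\<mu>_within) auto
  qed
  ultimately show False by simp
qed

lemma interior_local_min_minus_gaussian:
  assumes "tmin < y" "y < tmax" "0 < \<eta>"
    and min: "\<And>z. z \<in> ball (x, y) \<eta> \<Longrightarrow> snd z \<in> {tmin..tmax} \<Longrightarrow>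
      \<mu> (x, y) - \<delta> * gaussian l (\<xi>\<^sub>0, \<theta>\<^sub>0) (x, y) \<le> \<mu> z - \<delta> * gaussian l (\<xi>\<^sub>0, \<theta>\<^sub>0) z"
  defines "g \<equiv> gaussian l (\<xi>\<^sub>0, \<theta>\<^sub>0) (x, y)"
  shows "D\<mu> (x, y) (1, 0) = \<delta> * g * (- 2 * l * (x - \<xi>\<^sub>0))"
    and "\<delta> * g * (4 * l\<^sup>2 * (x - \<xi>\<^sub>0)\<^sup>2 - 2 * l) \<le> D2\<mu> (x, y) (1, 0) (1, 0)"
    and "\<delta> * g * (4 * l\<^sup>2 * (y - \<theta>\<^sub>0)\<^sup>2 - 2 * l) \<le> D2\<mu> (x, y) (0, 1) (0, 1)"
proof -
  define \<eta>' where "\<eta>' = min \<eta> (min (y - tmin) (tmax - y))"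
  have "0 < \<eta>'"
    using assms by (simp add: \<eta>'_def)
  have inside: "z \<in> ball (x, y) \<eta>" "tmin < snd z" "snd z < tmax" if "z \<in> ball (x, y) \<eta>'" for z
    using that dist_snd_le[of "(x, y)" z] by (auto simp: \<eta>'_def dist_real_def)
  have directional:
    "D\<mu> (x, y) e = \<delta> * g * (- 2 * l * inner ((x, y) - (\<xi>\<^sub>0, \<theta>\<^sub>0)) e)"
    "\<delta> * g * (4 * l\<^sup>2 * (inner ((x, y) - (\<xi>\<^sub>0, \<theta>\<^sub>0)) e)\<^sup>2 - 2 * l) \<le> D2\<mu> (x, y) e e"
    if "norm e = 1" for e
    unfolding g_def
    using local_min_minus_gaussian[OF \<open>0 < \<eta>'\<close> that, of "(x, y)" \<mu> \<delta> l "(\<xi>\<^sub>0, \<theta>\<^sub>0)" D\<mu> "D2\<mu> (x, y)"]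
      min inside has_derivative_interior assms(1,2) less_imp_le
    by (metis atLeastAtMost_iff prod.collapse)+
  show "D\<mu> (x, y) (1, 0) = \<delta> * g * (- 2 * l * (x - \<xi>\<^sub>0))"
    and "\<delta> * g * (4 * l\<^sup>2 * (x - \<xi>\<^sub>0)\<^sup>2 - 2 * l) \<le> D2\<mu> (x, y) (1, 0) (1, 0)"
    and "\<delta> * g * (4 * l\<^sup>2 * (y - \<theta>\<^sub>0)\<^sup>2 - 2 * l) \<le> D2\<mu> (x, y) (0, 1) (0, 1)"
    using directional[of "(1, 0)"] directional[of "(0, 1)"] by simp_all
qed

lemma interior_local_min_below_gaussian_impossible:
  assumes "tmin < y" "y < tmax" "0 < \<delta>" "0 \<le> K" "1 \<le> l"
    and l_large: "2 * (tmax + \<alpha> + \<bar>c\<bar> * R) + K \<le> l * (min tmin \<alpha> * \<rho>\<^sup>2)"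
    and "0 \<le> \<rho>" "\<rho> \<le> dist (x, y) (\<xi>\<^sub>0, \<theta>\<^sub>0)" "\<bar>x - \<xi>\<^sub>0\<bar> \<le> R"
    and nu_bound: "r * (nu tmin tmax \<mu> x - 1) \<le> K"
    and "0 < \<eta>" and min: "\<And>z. z \<in> ball (x, y) \<eta> \<Longrightarrow> snd z \<in> {tmin..tmax} \<Longrightarrow>
      \<mu> (x, y) - \<delta> * gaussian l (\<xi>\<^sub>0, \<theta>\<^sub>0) (x, y) \<le> \<mu> z - \<delta> * gaussian l (\<xi>\<^sub>0, \<theta>\<^sub>0) z"
    and below: "\<mu> (x, y) \<le> \<delta> * gaussian l (\<xi>\<^sub>0, \<theta>\<^sub>0) (x, y)"
  shows False
proof -
  define g where "g = gaussian l (\<xi>\<^sub>0, \<theta>\<^sub>0) (x, y)"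
  define X where "X = x - \<xi>\<^sub>0"
  define Y where "Y = y - \<theta>\<^sub>0"
  note derivatives = interior_local_min_minus_gaussian[OF assms(1,2) \<open>0 < \<eta>\<close> min, folded g_def X_def Y_def]
  have "0 < \<delta> * g"
    using \<open>0 < \<delta>\<close> gaussian_pos[of l "(\<xi>\<^sub>0, \<theta>\<^sub>0)" "(x, y)"] by (simp add: g_def)
  have "K < y * (4 * l\<^sup>2 * X\<^sup>2 - 2 * l) + \<alpha> * (4 * l\<^sup>2 * Y\<^sup>2 - 2 * l) + c * (- 2 * l * X)"
  proof (rule gaussian_barrier_inequality[where a = "min tmin \<alpha>" and T = tmax and \<rho> = \<rho>])
    have "\<rho>\<^sup>2 \<le> (dist (x, y) (\<xi>\<^sub>0, \<theta>\<^sub>0))\<^sup>2"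
      using assms(7,8) by (simp add: power_mono)
    then show "\<rho>\<^sup>2 \<le> X\<^sup>2 + Y\<^sup>2"
      by (simp add: X_def Y_def dist_Pair_Pair dist_real_def)
  qed (use assms tmin_pos \<alpha>_pos in \<open>auto simp: X_def\<close>)
  then have "\<delta> * g * K < \<delta> * g *
      (y * (4 * l\<^sup>2 * X\<^sup>2 - 2 * l) + \<alpha> * (4 * l\<^sup>2 * Y\<^sup>2 - 2 * l) + c * (- 2 * l * X))"
    using \<open>0 < \<delta> * g\<close> by (rule mult_strict_left_mono)
  also have "\<dots> = y * (\<delta> * g * (4 * l\<^sup>2 * X\<^sup>2 - 2 * l)) + \<alpha> * (\<delta> * g * (4 * l\<^sup>2 * Y\<^sup>2 - 2 * l))
      + c * (\<delta> * g * (- 2 * l * X))"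
    by (simp add: algebra_simps)
  also have "\<dots> \<le> y * D2\<mu> (x, y) (1, 0) (1, 0) + \<alpha> * D2\<mu> (x, y) (0, 1) (0, 1) + c * D\<mu> (x, y) (1, 0)"
    using derivatives assms(1) tmin_pos \<alpha>_pos by (auto intro!: add_mono mult_left_mono)
  also have "\<dots> = \<mu> (x, y) * (r * (nu tmin tmax \<mu> x - 1))"
    using eq[of y x] assms(1,2) by (simp add: algebra_simps)
  also have "\<dots> \<le> \<mu> (x, y) * K"
    using nu_bound nonneg[of y x] assms(1,2) by (intro mult_left_mono) auto
  also have "\<dots> \<le> \<delta> * g * K"
    using below \<open>0 \<le> K\<close> by (simp add: g_def mult_right_mono)
  finally show False by simp
qed

lemma local_min_below_gaussian_impossible:
  assumes "tmin < \<theta>\<^sub>0" "\<theta>\<^sub>0 < tmax" "0 < \<delta>" "0 < \<rho>" "0 \<le> K" "1 \<le> l"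
    and nu_bound: "\<And>x. \<bar>x - \<xi>\<^sub>0\<bar> \<le> R \<Longrightarrow> r * (nu tmin tmax \<mu> x - 1) \<le> K"
    and l_large: "2 * (tmax + \<alpha> + \<bar>c\<bar> * R) + K \<le> l * (min tmin \<alpha> * \<rho>\<^sup>2)"
    and "tmin \<le> y" "y \<le> tmax" "\<rho> \<le> dist (x, y) (\<xi>\<^sub>0, \<theta>\<^sub>0)" "dist (x, y) (\<xi>\<^sub>0, \<theta>\<^sub>0) \<le> R"
    and "0 < \<eta>" and min: "\<And>z. z \<in> ball (x, y) \<eta> \<Longrightarrow> snd z \<in> {tmin..tmax} \<Longrightarrow>
      \<mu> (x, y) - \<delta> * gaussian l (\<xi>\<^sub>0, \<theta>\<^sub>0) (x, y) \<le> \<mu> z - \<delta> * gaussian l (\<xi>\<^sub>0, \<theta>\<^sub>0) z"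
    and below: "\<mu> (x, y) \<le> \<delta> * gaussian l (\<xi>\<^sub>0, \<theta>\<^sub>0) (x, y)"
  shows False
proof (cases "y = tmin \<or> y = tmax")
  case True
  show False
    by (rule boundary_local_min_below_gaussian_impossible[OF assms(1-3) _ True \<open>0 < \<eta>\<close> min])
      (use \<open>1 \<le> l\<close> in simp)
next
  case False
  have "\<bar>x - \<xi>\<^sub>0\<bar> \<le> R"
    using dist_fst_le[of "(x, y)" "(\<xi>\<^sub>0, \<theta>\<^sub>0)"] assms(12) by (simp add: dist_real_def)
  with False show False
    using interior_local_min_below_gaussian_impossible[OF _ _ \<open>0 < \<delta>\<close> \<open>0 \<le> K\<close> \<open>1 \<le> l\<close> l_large
        less_imp_le[OF \<open>0 < \<rho>\<close>] _ _ nu_bound \<open>0 < \<eta>\<close> min below] assms(9-11)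
    by linarith
qed

lemma gaussian_barrier_le_off_annulus:
  assumes "0 < \<delta>" "1 \<le> l" "0 \<le> R"
    and near: "\<And>z. z \<in> strip \<Longrightarrow> dist z (\<xi>\<^sub>0, \<theta>\<^sub>0) \<le> \<rho> \<Longrightarrow> \<delta> \<le> \<mu> z"
    and "z \<in> strip" "dist z (\<xi>\<^sub>0, \<theta>\<^sub>0) \<le> \<rho> \<or> R \<le> dist z (\<xi>\<^sub>0, \<theta>\<^sub>0)"
  shows "\<delta> * (gaussian l (\<xi>\<^sub>0, \<theta>\<^sub>0) z - exp (- l * R\<^sup>2)) \<le> \<mu> z"
proof (cases "dist z (\<xi>\<^sub>0, \<theta>\<^sub>0) \<le> \<rho>")
  case True
  have "gaussian l (\<xi>\<^sub>0, \<theta>\<^sub>0) z - exp (- l * R\<^sup>2) \<le> 1"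
    using gaussian_le_one[of l "(\<xi>\<^sub>0, \<theta>\<^sub>0)" z] \<open>1 \<le> l\<close> exp_gt_zero[of "- l * R\<^sup>2"] by linarith
  then have "\<delta> * (gaussian l (\<xi>\<^sub>0, \<theta>\<^sub>0) z - exp (- l * R\<^sup>2)) \<le> \<delta>"
    using mult_left_mono[of _ 1 \<delta>] \<open>0 < \<delta>\<close> by fastforce
  with near[OF \<open>z \<in> strip\<close> True] show ?thesis
    by linarith
next
  case False
  then have "gaussian l (\<xi>\<^sub>0, \<theta>\<^sub>0) z \<le> exp (- l * R\<^sup>2)"
    using assms(2,3,6) by (simp add: gaussian_def power_mono)
  moreover have "0 \<le> \<mu> z"
    using nonneg \<open>z \<in> strip\<close> by (cases z) auto
  ultimately show ?thesis
    using \<open>0 < \<delta>\<close> by (simp add: mult_nonneg_nonpos order.trans[OF _ \<open>0 \<le> \<mu> z\<close>])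
qed

lemma gaussian_minorant_on_annulus:
  assumes "tmin < \<theta>\<^sub>0" "\<theta>\<^sub>0 < tmax" "0 < \<delta>" "0 < \<rho>" "0 \<le> K" "1 \<le> l"
    and near: "\<And>z. z \<in> strip \<Longrightarrow> dist z (\<xi>\<^sub>0, \<theta>\<^sub>0) \<le> \<rho> \<Longrightarrow> \<delta> \<le> \<mu> z"
    and nu_bound: "\<And>x. \<bar>x - \<xi>\<^sub>0\<bar> \<le> R \<Longrightarrow> r * (nu tmin tmax \<mu> x - 1) \<le> K"
    and l_large: "2 * (tmax + \<alpha> + \<bar>c\<bar> * R) + K \<le> l * (min tmin \<alpha> * \<rho>\<^sup>2)"
    and "z \<in> strip" "\<rho> \<le> dist z (\<xi>\<^sub>0, \<theta>\<^sub>0)" "dist z (\<xi>\<^sub>0, \<theta>\<^sub>0) \<le> R"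
  shows "\<delta> * (gaussian l (\<xi>\<^sub>0, \<theta>\<^sub>0) z - exp (- l * R\<^sup>2)) \<le> \<mu> z"
proof -
  define v where "v z = \<mu> z - \<delta> * (gaussian l (\<xi>\<^sub>0, \<theta>\<^sub>0) z - exp (- l * R\<^sup>2))" for z
  define A where "A = {z \<in> strip. \<rho> \<le> dist z (\<xi>\<^sub>0, \<theta>\<^sub>0) \<and> dist z (\<xi>\<^sub>0, \<theta>\<^sub>0) \<le> R}"
  have "0 \<le> R"
    using assms(4,11,12) by linarith
  have "A = (strip \<inter> cball (\<xi>\<^sub>0, \<theta>\<^sub>0) R) - ball (\<xi>\<^sub>0, \<theta>\<^sub>0) \<rho>"
    by (auto simp: A_def dist_commute)
  then have "compact A"
    by (simp add: compact_diff closed_Int_compact closed_Times)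
  moreover have "z \<in> A"
    using assms by (simp add: A_def)
  moreover have "continuous_on A v"
    unfolding v_def gaussian_def A_def
    by (intro continuous_intros continuous_on_subset[OF continuous_on_\<mu>]) auto
  ultimately obtain p where "p \<in> A" and p_min: "\<And>z. z \<in> A \<Longrightarrow> v p \<le> v z"
    using continuous_attains_inf[of A v] by blast
  obtain x y where p: "p = (x, y)"
    by (cases p)
  have "0 \<le> v p"
  proof (rule ccontr)
    assume "\<not> 0 \<le> v p"
    then have "\<rho> < dist p (\<xi>\<^sub>0, \<theta>\<^sub>0)" "dist p (\<xi>\<^sub>0, \<theta>\<^sub>0) < R"
      using gaussian_barrier_le_off_annulus[OF \<open>0 < \<delta>\<close> \<open>1 \<le> l\<close> \<open>0 \<le> R\<close> near, where z = p] \<open>p \<in> A\<close>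
      by (force simp: v_def A_def)+
    moreover have "open {z. \<rho> < dist z (\<xi>\<^sub>0, \<theta>\<^sub>0) \<and> dist z (\<xi>\<^sub>0, \<theta>\<^sub>0) < R}"
      by (intro open_Collect_conj open_Collect_less continuous_intros)
    ultimately obtain \<eta> where "0 < \<eta>"
      and \<eta>: "ball p \<eta> \<subseteq> {z. \<rho> < dist z (\<xi>\<^sub>0, \<theta>\<^sub>0) \<and> dist z (\<xi>\<^sub>0, \<theta>\<^sub>0) < R}"
      using open_contains_ball by blast
    have "\<mu> (x, y) - \<delta> * gaussian l (\<xi>\<^sub>0, \<theta>\<^sub>0) (x, y) \<le> \<mu> z - \<delta> * gaussian l (\<xi>\<^sub>0, \<theta>\<^sub>0) z"
      if "z \<in> ball (x, y) \<eta>" "snd z \<in> {tmin..tmax}" for z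
    proof -
      have "z \<in> A"
        using \<eta> that by (auto simp: A_def mem_Times_iff p)
      then show ?thesis
        using p_min by (simp add: v_def p algebra_simps)
    qed
    moreover have "\<mu> (x, y) \<le> \<delta> * gaussian l (\<xi>\<^sub>0, \<theta>\<^sub>0) (x, y)"
      using \<open>\<not> 0 \<le> v p\<close> mult_pos_pos[OF \<open>0 < \<delta>\<close> exp_gt_zero[of "- l * R\<^sup>2"]]
      by (simp add: v_def p algebra_simps)
    ultimately show False
      using local_min_below_gaussian_impossible[where \<xi>\<^sub>0 = \<xi>\<^sub>0 and x = x and y = y,
          OF assms(1-6) nu_bound l_large _ _ _ _ \<open>0 < \<eta>\<close>]
        \<open>p \<in> A\<close> by (auto simp: A_def p)
  qed
  then show ?thesis
    using p_min[OF \<open>z \<in> A\<close>] by (simp add: v_def)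
qed

lemma positive_on_strip:
  assumes "tmin < \<theta>\<^sub>0" "\<theta>\<^sub>0 < tmax" "0 < \<mu> (\<xi>\<^sub>0, \<theta>\<^sub>0)" and "z \<in> strip"
  shows "0 < \<mu> z"
proof -
  define \<delta> where "\<delta> = \<mu> (\<xi>\<^sub>0, \<theta>\<^sub>0) / 2"
  have "0 < \<delta>"
    using assms by (simp add: \<delta>_def)
  obtain \<rho> where "0 < \<rho>" and near: "\<And>z. z \<in> strip \<Longrightarrow> dist z (\<xi>\<^sub>0, \<theta>\<^sub>0) \<le> \<rho> \<Longrightarrow> \<delta> \<le> \<mu> z"
    using continuous_on_lower_bound_near[OF continuous_on_\<mu>, of "(\<xi>\<^sub>0, \<theta>\<^sub>0)"] assms
    unfolding \<delta>_def by auto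
  show ?thesis
  proof (cases "dist z (\<xi>\<^sub>0, \<theta>\<^sub>0) \<le> \<rho>")
    case True
    then show ?thesis
      using near \<open>z \<in> strip\<close> \<open>0 < \<delta>\<close> by fastforce
  next
    case False
    define R where "R = dist z (\<xi>\<^sub>0, \<theta>\<^sub>0) + 1"
    obtain B where B: "\<And>x. x \<in> {\<xi>\<^sub>0 - R..\<xi>\<^sub>0 + R} \<Longrightarrow> \<bar>nu tmin tmax \<mu> x\<bar> \<le> B"
      using loc_bdd[of "{\<xi>\<^sub>0 - R..\<xi>\<^sub>0 + R}"] unfolding bounded_iff
      by (auto simp del: atLeastAtMost_iff)
    define K where "K = r * max B 0"
    have "0 \<le> K"
      using r_pos by (simp add: K_def)
    have nu_bound: "r * (nu tmin tmax \<mu> x - 1) \<le> K" if "\<bar>x - \<xi>\<^sub>0\<bar> \<le> R" for x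
      using B[of x] that r_pos by (auto simp: K_def abs_le_iff intro!: mult_left_mono)
    define m where "m = min tmin \<alpha> * \<rho>\<^sup>2"
    define l where "l = max 1 ((2 * (tmax + \<alpha> + \<bar>c\<bar> * R) + K) / m)"
    have "0 < m"
      using tmin_pos \<alpha>_pos \<open>0 < \<rho>\<close> by (simp add: m_def)
    then have l_large: "2 * (tmax + \<alpha> + \<bar>c\<bar> * R) + K \<le> l * m"
      unfolding l_def by (simp add: pos_divide_le_eq[symmetric])
    have "1 \<le> l"
      by (simp add: l_def)
    moreover have "(dist z (\<xi>\<^sub>0, \<theta>\<^sub>0))\<^sup>2 < R\<^sup>2"
      by (simp add: R_def power_strict_mono)
    ultimately have "l * (dist z (\<xi>\<^sub>0, \<theta>\<^sub>0))\<^sup>2 < l * R\<^sup>2"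
      by simp
    then have "0 < \<delta> * (gaussian l (\<xi>\<^sub>0, \<theta>\<^sub>0) z - exp (- l * R\<^sup>2))"
      using \<open>0 < \<delta>\<close> by (simp add: gaussian_def)
    also have "\<dots> \<le> \<mu> z"
      using False
      by (intro gaussian_minorant_on_annulus[OF assms(1,2) \<open>0 < \<delta>\<close> \<open>0 < \<rho>\<close> \<open>0 \<le> K\<close> \<open>1 \<le> l\<close>
            near nu_bound l_large[unfolded m_def] \<open>z \<in> strip\<close>]) (auto simp: R_def)
    finally show ?thesis .
  qed
qed

lemma ratio_bounded_on_rectangle:
  assumes "tmin < \<theta>\<^sub>0" "\<theta>\<^sub>0 < tmax" "0 < \<mu> (\<xi>\<^sub>0, \<theta>\<^sub>0)"
  shows "\<exists>C. \<forall>z\<in>{-b..b} \<times> {tmin..tmax}. \<forall>z'\<in>{-b..b} \<times> {tmin..tmax}. \<mu> z \<le> C * \<mu> z'"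
proof (rule compact_positive_ratio_bounded)
  show "compact ({-b..b} \<times> {tmin..tmax})"
    by (intro compact_Times) auto
  show "continuous_on ({-b..b} \<times> {tmin..tmax}) \<mu>"
    using continuous_on_\<mu> by (rule continuous_on_subset) auto
  show "0 < \<mu> z" if "z \<in> {-b..b} \<times> {tmin..tmax}" for z
    using positive_on_strip[OF assms] that by (auto simp: mem_Times_iff)
qed

end

theorem propositionA1:
  fixes tmin tmax \<alpha> r c :: real
    and \<mu> :: "real \<times> real \<Rightarrow> real"
    and D\<mu> :: "real \<times> real \<Rightarrow> ((real \<times> real) \<Rightarrow>\<^sub>L real)"
    and D2\<mu> :: "real \<times> real \<Rightarrow> ((real \<times> real) \<Rightarrow>\<^sub>L ((real \<times> real) \<Rightarrow>\<^sub>L real))"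
  assumes "0 < tmin" and "tmin < tmax" and "0 < \<alpha>" and "0 < r"
    and C2: "C2_on_with (UNIV \<times> {tmin..tmax}) \<mu> D\<mu> D2\<mu>"
    and nonneg: "\<And>\<xi> \<theta>. \<theta> \<in> {tmin..tmax} \<Longrightarrow> 0 \<le> \<mu> (\<xi>, \<theta>)"
    and eq: "\<And>\<xi> \<theta>. \<theta> \<in> {tmin<..<tmax} \<Longrightarrow>
        - c * D\<mu> (\<xi>, \<theta>) (1, 0)
          = \<theta> * D2\<mu> (\<xi>, \<theta>) (1, 0) (1, 0) + \<alpha> * D2\<mu> (\<xi>, \<theta>) (0, 1) (0, 1)
            + r * \<mu> (\<xi>, \<theta>) * (1 - nu tmin tmax \<mu> \<xi>)"
    and bc_min: "\<And>\<xi>. D\<mu> (\<xi>, tmin) (0, 1) = 0"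
    and bc_max: "\<And>\<xi>. D\<mu> (\<xi>, tmax) (0, 1) = 0"
    and loc_bdd: "\<And>K. compact K \<Longrightarrow> bounded (nu tmin tmax \<mu> ` K)"
  shows "\<forall>b>0. \<exists>C::real. \<forall>\<xi>\<in>{-b<..<b}. \<forall>\<theta>\<in>{tmin<..<tmax}. \<forall>\<theta>'\<in>{tmin<..<tmax}.
           \<mu> (\<xi>, \<theta>) \<le> C * \<mu> (\<xi>, \<theta>')"
proof (intro allI impI)
  fix b :: real
  interpret travelling_wave tmin tmax \<alpha> r c \<mu> D\<mu> D2\<mu>
    by (rule travelling_wave.intro) (fact assms)+
  show "\<exists>C. \<forall>\<xi>\<in>{-b<..<b}. \<forall>\<theta>\<in>{tmin<..<tmax}. \<forall>\<theta>'\<in>{tmin<..<tmax}. \<mu> (\<xi>, \<theta>) \<le> C * \<mu> (\<xi>, \<theta>')"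
  proof (cases "\<exists>\<xi>\<^sub>0 \<theta>\<^sub>0. \<theta>\<^sub>0 \<in> {tmin<..<tmax} \<and> 0 < \<mu> (\<xi>\<^sub>0, \<theta>\<^sub>0)")
    case True
    then obtain \<xi>\<^sub>0 \<theta>\<^sub>0 where "tmin < \<theta>\<^sub>0" "\<theta>\<^sub>0 < tmax" "0 < \<mu> (\<xi>\<^sub>0, \<theta>\<^sub>0)"
      by auto
    then obtain C where "\<forall>z\<in>{-b..b} \<times> {tmin..tmax}. \<forall>z'\<in>{-b..b} \<times> {tmin..tmax}. \<mu> z \<le> C * \<mu> z'"
      using ratio_bounded_on_rectangle by blast
    then show ?thesis
      by (intro exI[of _ C]) auto
  next
    case False
    then have "\<mu> (\<xi>, \<theta>) = 0" if "\<theta> \<in> {tmin<..<tmax}" for \<xi> \<theta>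
    proof -
      have "0 \<le> \<mu> (\<xi>, \<theta>)" "\<not> 0 < \<mu> (\<xi>, \<theta>)"
        using nonneg[of \<theta> \<xi>] False that by auto
      then show ?thesis by simp
    qed
    then show ?thesis
      by (intro exI[of _ 0]) auto
  qed
qed

end
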